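(* Let $Q$ be a finite interval order and let $A$ and $B$ be disjoint subsets of the ground set of $Q$. Then there exists a linear extension $L$ of $Q$ such that $a > b$ in $L$ for every $a \in A$ and $b \in B$ with $a$ and $b$ incomparable in $Q$.
   Context: Posets are finite and reflexive. A finite poset $P$ is an interval order if each element $x$ can be assigned a closed bounded real interval $[\ell(x), r(x)]$ such that for distinct $x,y$, $x<y$ in $P$ if and only if $r(x) < \ell(y)$. A linear extension of $P$ is a total order $L$ on the ground set of $P$ such that $x<y$ in $P$ implies $x<y$ in $L$. *)

theory Defs
  imports Complex_Main
begin

text \<open>A finite poset is represented by a finite ground set X and a partial order
  relation P on X (as a set of pairs, reflexive on X). (x,y) \<in> P means x \<le> y.\<close>

definition finite_poset :: "'a set \<Rightarrow> 'a rel \<Rightarrow> bool" where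
  "finite_poset X P \<longleftrightarrow> finite X \<and> partial_order_on X P \<and> P \<subseteq> X \<times> X"

definition interval_order :: "'a set \<Rightarrow> 'a rel \<Rightarrow> bool" where
  "interval_order X P \<longleftrightarrow> finite_poset X P \<and>
     (\<exists>l r :: 'a \<Rightarrow> real. (\<forall>x\<in>X. l x \<le> r x) \<and>
        (\<forall>x\<in>X. \<forall>y\<in>X. x \<noteq> y \<longrightarrow> ((x, y) \<in> P \<longleftrightarrow> r x < l y)))"

definition incomparable :: "'a rel \<Rightarrow> 'a \<Rightarrow> 'a \<Rightarrow> bool" where
  "incomparable P x y \<longleftrightarrow> (x, y) \<notin> P \<and> (y, x) \<notin> P"

definition linear_extension :: "'a set \<Rightarrow> 'a rel \<Rightarrow> 'a rel \<Rightarrow> bool" where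
  "linear_extension X P L \<longleftrightarrow> linear_order_on X L \<and> L \<subseteq> X \<times> X \<and> P \<subseteq> L"

end

theory Submission
  imports Defs "HOL-Library.Product_Lexorder"
begin

text \<open>Place each element of \<open>A\<close> at the right endpoint of its interval and every other
  element at its left endpoint. Comparable elements stay strictly ordered, since \<open>x < y\<close>
  means \<open>r x < l y\<close>; an incomparable pair \<open>a \<in> A\<close>, \<open>b \<in> B\<close> has overlapping intervals,
  so \<open>l b \<le> r a\<close>. Sorting by this position, with ties broken by putting \<open>B\<close> first and \<open>A\<close>
  last, yields the required linear extension.\<close>

lemma linear_order_on_inj_key:
  fixes k :: "'a \<Rightarrow> 'b::linorder"
  assumes "inj_on k X"
  shows "linear_order_on X {(x, y). x \<in> X \<and> y \<in> X \<and> k x \<le> k y}"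
  using assms
  unfolding linear_order_on_def partial_order_on_def preorder_on_def refl_on_def trans_def
    antisym_def total_on_def inj_on_def
  by (auto dest: order_trans)

lemma linear_extension_refining_key:
  fixes f :: "'a \<Rightarrow> 'b::linorder"
  assumes "finite X" and "Q \<subseteq> X \<times> X"
    and mono: "\<And>x y. (x, y) \<in> Q \<Longrightarrow> x \<noteq> y \<Longrightarrow> f x < f y"
  shows "\<exists>L. linear_extension X Q L \<and> (\<forall>x\<in>X. \<forall>y\<in>X. f x < f y \<longrightarrow> (x, y) \<in> L)"
proof -
  obtain i :: "'a \<Rightarrow> nat" where "inj_on i X"
    using \<open>finite X\<close> finite_imp_inj_to_nat_seg by blast
  define k where "k x = (f x, i x)" for x
  define L where "L = {(x, y). x \<in> X \<and> y \<in> X \<and> k x \<le> k y}"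
  have "inj_on k X"
    using \<open>inj_on i X\<close> unfolding k_def inj_on_def by auto
  then have "linear_order_on X L"
    unfolding L_def by (rule linear_order_on_inj_key)
  moreover have refines: "(x, y) \<in> L" if "x \<in> X" "y \<in> X" "f x < f y" for x y
    using that unfolding L_def k_def by (simp add: less_eq_prod_def)
  moreover have "Q \<subseteq> L"
  proof
    fix p assume "p \<in> Q"
    with \<open>Q \<subseteq> X \<times> X\<close> obtain x y where p: "p = (x, y)" "x \<in> X" "y \<in> X" by auto
    show "p \<in> L"
    proof (cases "x = y")
      case True
      then show ?thesis using p unfolding L_def by simp
    next
      case False
      then show ?thesis using p \<open>p \<in> Q\<close> mono refines by blast
    qed
  qed
  ultimately show ?thesis
    unfolding linear_extension_def L_def by blast
qed

theorem lemma1: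
  fixes X :: "'a set" and Q :: "'a rel" and A B :: "'a set"
  assumes "interval_order X Q"
    and "A \<subseteq> X" and "B \<subseteq> X" and "A \<inter> B = {}"
  shows "\<exists>L. linear_extension X Q L \<and>
           (\<forall>a\<in>A. \<forall>b\<in>B. incomparable Q a b \<longrightarrow> (b, a) \<in> L \<and> a \<noteq> b)"
proof -
  from assms(1) obtain l r :: "'a \<Rightarrow> real" where lr: "\<forall>x\<in>X. l x \<le> r x"
    and Q_iff: "\<forall>x\<in>X. \<forall>y\<in>X. x \<noteq> y \<longrightarrow> ((x, y) \<in> Q \<longleftrightarrow> r x < l y)"
    and "finite X" "Q \<subseteq> X \<times> X"
    unfolding interval_order_def finite_poset_def by blast
  define pos where "pos x = (if x \<in> A then r x else l x)" for x
  define tie :: "'a \<Rightarrow> nat" where "tie x = (if x \<in> B then 0 else if x \<in> A then 2 else 1)" for x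
  have "(pos x, tie x) < (pos y, tie y)" if "(x, y) \<in> Q" "x \<noteq> y" for x y
  proof -
    have "x \<in> X" "y \<in> X" using that \<open>Q \<subseteq> X \<times> X\<close> by auto
    then have "pos x \<le> r x" "r x < l y" "l y \<le> pos y"
      using that lr Q_iff unfolding pos_def by auto
    then show ?thesis by simp
  qed
  with \<open>finite X\<close> \<open>Q \<subseteq> X \<times> X\<close> obtain L where L: "linear_extension X Q L"
    and refines: "\<forall>x\<in>X. \<forall>y\<in>X. (pos x, tie x) < (pos y, tie y) \<longrightarrow> (x, y) \<in> L"
    using linear_extension_refining_key[of X Q "\<lambda>x. (pos x, tie x)"] by blast
  have "(b, a) \<in> L \<and> a \<noteq> b" if "a \<in> A" "b \<in> B" "incomparable Q a b" for a b
  proof -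
    have ab: "a \<in> X" "b \<in> X" "a \<notin> B" "b \<notin> A" "a \<noteq> b" using that assms(2-4) by auto
    then have "\<not> r a < l b" using that Q_iff unfolding incomparable_def by metis
    then have "(pos b, tie b) < (pos a, tie a)"
      using ab that unfolding pos_def tie_def by auto
    then show ?thesis using refines ab by blast
  qed
  with L show ?thesis by blast
qed

end
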